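(* Let $\mu$ be a probability measure on $\mathbb{R}$ for which there exists $\lambda\in\mathbb{R}\setminus\{0\}$ with $\int_{\mathbb{R}}e^{\lambda x}\mu(dx)<\infty$. Then the characteristic function of $\mu$ does not vanish identically on any (nondegenerate) interval. *)

theory Defs
  imports "HOL-Probability.Probability"
begin

end

(*
  Put F z = \<integral> exp (- \<i> z l x) d\<mu>(x). On the strip 0 \<le> Im z \<le> 1 the integrand is dominated by
  1 + exp (l x), which is integrable, so F is continuous on the closed strip and holomorphic in
  its interior; on the real axis F t is the characteristic function at - l t. If the characteristic
  function vanished on an interval, F would vanish on a real segment. Schwarz reflection across
  that segment and the identity theorem then make F vanish on the whole strip, contradicting
  F 0 = 1.
*)
theory Submission
  imports Defs "HOL-Complex_Analysis.Complex_Analysis"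
begin

lemma tendsto_integral_dominated:
  fixes f :: "'a::first_countable_topology \<Rightarrow> 'b \<Rightarrow> 'c::{banach, second_countable_topology}"
  assumes "g \<in> borel_measurable M" and "integrable M w"
    and bound: "\<forall>\<^sub>F y in at x within S. f y \<in> borel_measurable M \<and> (AE \<xi> in M. norm (f y \<xi>) \<le> w \<xi>)"
    and lim: "AE \<xi> in M. ((\<lambda>y. f y \<xi>) \<longlongrightarrow> g \<xi>) (at x within S)"
  shows "((\<lambda>y. integral\<^sup>L M (f y)) \<longlongrightarrow> integral\<^sup>L M g) (at x within S)"
  unfolding tendsto_at_iff_sequentially
proof (intro allI impI)
  fix X :: "nat \<Rightarrow> 'a" assume "\<forall>i. X i \<in> S - {x}" "X \<longlonglongrightarrow> x"
  then have X: "filterlim X (at x within S) sequentially"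
    by (auto simp: filterlim_at)
  from filterlim_iff[THEN iffD1, OF X, rule_format, OF bound]
  obtain N where N: "\<And>n. N \<le> n \<Longrightarrow> f (X n) \<in> borel_measurable M \<and> (AE \<xi> in M. norm (f (X n) \<xi>) \<le> w \<xi>)"
    by (auto simp: eventually_sequentially)
  show "((\<lambda>y. integral\<^sup>L M (f y)) \<circ> X) \<longlonglongrightarrow> integral\<^sup>L M g"
    unfolding comp_def
  proof (rule LIMSEQ_offset[where k = N], rule integral_dominated_convergence)
    show "AE \<xi> in M. (\<lambda>n. f (X (n + N)) \<xi>) \<longlonglongrightarrow> g \<xi>"
      using lim
    proof eventually_elim
      case (elim \<xi>)
      then show ?case
        by (intro LIMSEQ_ignore_initial_segment filterlim_compose[OF _ X])
    qed
    show "f (X (n + N)) \<in> borel_measurable M" "AE \<xi> in M. norm (f (X (n + N)) \<xi>) \<le> w \<xi>" for n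
      using N[of "n + N"] by simp_all
  qed fact+
qed

lemma continuous_on_integral_dominated:
  fixes f :: "'a::first_countable_topology \<Rightarrow> 'b \<Rightarrow> 'c::{banach, second_countable_topology}"
  assumes "\<And>y. y \<in> S \<Longrightarrow> f y \<in> borel_measurable M" and "integrable M w"
    and "\<And>y \<xi>. y \<in> S \<Longrightarrow> \<xi> \<in> space M \<Longrightarrow> norm (f y \<xi>) \<le> w \<xi>"
    and "\<And>\<xi>. \<xi> \<in> space M \<Longrightarrow> continuous_on S (\<lambda>y. f y \<xi>)"
  shows "continuous_on S (\<lambda>y. integral\<^sup>L M (f y))"
  unfolding continuous_on_def
proof
  fix x assume "x \<in> S"
  show "((\<lambda>y. integral\<^sup>L M (f y)) \<longlongrightarrow> integral\<^sup>L M (f x)) (at x within S)"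
  proof (rule tendsto_integral_dominated)
    show "\<forall>\<^sub>F y in at x within S. f y \<in> borel_measurable M \<and> (AE \<xi> in M. norm (f y \<xi>) \<le> w \<xi>)"
      using assms by (auto simp: eventually_at_filter intro!: AE_I2)
    show "AE \<xi> in M. ((\<lambda>y. f y \<xi>) \<longlongrightarrow> f x \<xi>) (at x within S)"
      using assms(4) \<open>x \<in> S\<close> by (auto simp: continuous_on_def intro!: AE_I2)
  qed (use assms \<open>x \<in> S\<close> in auto)
qed

lemma has_field_derivative_integral:
  fixes f f' :: "'a::{real_normed_field, banach, second_countable_topology} \<Rightarrow> 'b \<Rightarrow> 'a"
  assumes "r > 0" and "integrable M w"
    and meas: "\<And>y. y \<in> ball x r \<Longrightarrow> f y \<in> borel_measurable M"
    and int: "\<And>y. y \<in> ball x r \<Longrightarrow> integrable M (f y)"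
    and "f' x \<in> borel_measurable M"
    and deriv: "\<And>y \<xi>. y \<in> ball x r \<Longrightarrow> \<xi> \<in> space M \<Longrightarrow> ((\<lambda>y. f y \<xi>) has_field_derivative f' y \<xi>) (at y)"
    and bound: "\<And>y \<xi>. y \<in> ball x r \<Longrightarrow> \<xi> \<in> space M \<Longrightarrow> norm (f' y \<xi>) \<le> w \<xi>"
  shows "((\<lambda>y. integral\<^sup>L M (f y)) has_field_derivative integral\<^sup>L M (f' x)) (at x)"
proof -
  define q where "q y \<xi> = (f y \<xi> - f x \<xi>) / (y - x)" for y \<xi>
  have q_bound: "norm (q y \<xi>) \<le> w \<xi>" if "y \<in> ball x r" "y \<noteq> x" "\<xi> \<in> space M" for y \<xi>
  proof -
    have "norm (f y \<xi> - f x \<xi>) \<le> w \<xi> * norm (y - x)"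
      using that \<open>r > 0\<close> deriv bound
      by (intro field_differentiable_bound[of "ball x r" "\<lambda>y. f y \<xi>" "\<lambda>y. f' y \<xi>"])
         (auto intro: has_field_derivative_at_within)
    then show ?thesis using that by (simp add: q_def norm_divide divide_le_eq)
  qed
  have near: "\<forall>\<^sub>F y in at x. y \<in> ball x r - {x}"
    using \<open>r > 0\<close> by (intro eventually_at_in_open) auto
  have "(\<lambda>y. integral\<^sup>L M (q y)) \<midarrow>x\<rightarrow> integral\<^sup>L M (f' x)"
  proof (rule tendsto_integral_dominated)
    from near show "\<forall>\<^sub>F y in at x. q y \<in> borel_measurable M \<and> (AE \<xi> in M. norm (q y \<xi>) \<le> w \<xi>)"
    proof eventually_elim
      case (elim y)
      have "q y \<in> borel_measurable M"
        unfolding q_def using elim meas[of y] meas[of x] \<open>r > 0\<close>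
        by (auto intro!: borel_measurable_divide borel_measurable_diff)
      then show ?case using elim q_bound by (auto intro!: AE_I2)
    qed
    show "AE \<xi> in M. ((\<lambda>y. q y \<xi>) \<longlongrightarrow> f' x \<xi>) (at x)"
      using deriv \<open>r > 0\<close> by (auto simp: q_def has_field_derivative_iff intro!: AE_I2)
  qed fact+
  moreover have "\<forall>\<^sub>F y in at x. integral\<^sup>L M (q y) = (integral\<^sup>L M (f y) - integral\<^sup>L M (f x)) / (y - x)"
    using near
  proof eventually_elim
    case (elim y)
    then show ?case
      using int[of y] int[of x] \<open>r > 0\<close> by (simp add: q_def[abs_def] diff_divide_distrib[symmetric])
  qed
  ultimately show ?thesis
    by (simp add: has_field_derivative_iff tendsto_cong)
qed

lemma holomorphic_vanishing_on_real_axis: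
  fixes f :: "complex \<Rightarrow> complex"
  assumes "open S" and "connected S" and "cnj ` S \<subseteq> S" and "x \<in> S" and "x \<in> \<real>"
    and "f holomorphic_on (S \<inter> {z. 0 < Im z})"
    and "continuous_on (S \<inter> {z. 0 \<le> Im z}) f"
    and zero: "\<And>z. z \<in> S \<Longrightarrow> z \<in> \<real> \<Longrightarrow> f z = 0"
    and "z \<in> S" and "0 < Im z"
  shows "f z = 0"
proof -
  define g where "g z = (if 0 \<le> Im z then f z else cnj (f (cnj z)))" for z
  have "g holomorphic_on S"
    unfolding g_def[abs_def] using assms by (intro Schwarz_reflection) auto
  moreover have "x islimpt (S \<inter> \<real>)"
  proof (rule islimpt_approachable[THEN iffD2], intro allI impI)
    fix d :: real assume "d > 0"
    obtain e where "e > 0" "ball x e \<subseteq> S"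
      using \<open>open S\<close> \<open>x \<in> S\<close> openE by blast
    define y where "y = x + of_real (min d e / 2)"
    have "dist y x < min d e"
      using \<open>d > 0\<close> \<open>e > 0\<close> by (auto simp: y_def dist_norm min_def)
    then show "\<exists>y\<in>S \<inter> \<real>. y \<noteq> x \<and> dist y x < d"
      using \<open>d > 0\<close> \<open>e > 0\<close> \<open>ball x e \<subseteq> S\<close> \<open>x \<in> \<real>\<close>
      by (intro bexI[of _ y]) (auto simp: y_def dist_commute)
  qed
  moreover have "g y = 0" if "y \<in> S \<inter> \<real>" for y
    using that zero by (simp add: g_def complex_is_Real_iff)
  ultimately have "g z = 0"
    using analytic_continuation[OF _ \<open>open S\<close> \<open>connected S\<close> _ \<open>x \<in> S\<close>] \<open>z \<in> S\<close> by blast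
  then show ?thesis
    using \<open>0 < Im z\<close> by (simp add: g_def)
qed

lemma constant_on_closed_strip:
  fixes f :: "complex \<Rightarrow> 'a::t1_space"
  assumes cont: "continuous_on {z. 0 \<le> Im z \<and> Im z \<le> 1} f"
    and zero: "\<And>w. 0 < Im w \<Longrightarrow> Im w < 1 \<Longrightarrow> f w = c"
    and "0 \<le> Im z" and "Im z \<le> 1"
  shows "f z = c"
proof -
  \<comment> \<open>a boundary point \<open>z\<close> is reached along the segment from the midline point \<open>w\<close>\<close>
  define w where "w = Complex (Re z) (1 / 2)"
  show ?thesis
  proof (cases "z = w")
    case True
    have "0 < Im w" "Im w < 1" by (simp_all add: w_def)
    with True zero show ?thesis by blast
  next
    case False
    have "closed_segment z w \<subseteq> {z. 0 \<le> Im z \<and> Im z \<le> 1}"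
      using assms(3,4) unfolding Collect_conj_eq
      by (intro closed_segment_subset convex_Int convex_halfspace_Im_ge convex_halfspace_Im_le)
         (auto simp: w_def)
    then have "continuous_on (closure (open_segment z w)) f"
      using False by (simp add: continuous_on_subset[OF cont])
    moreover have "open_segment z w \<subseteq> {w. 0 < Im w \<and> Im w < 1}"
    proof
      fix y assume "y \<in> open_segment z w"
      then obtain u :: real where "0 < u" "u < 1" "y = (1 - u) *\<^sub>R z + u *\<^sub>R w"
        by (auto simp: in_segment)
      then have "Im y = (1 - u) * Im z + u / 2"
        by (simp add: w_def)
      moreover have "0 \<le> (1 - u) * Im z" "(1 - u) * Im z \<le> 1 - u"
        using \<open>u < 1\<close> assms(3,4) by (simp_all add: mult_left_le)
      ultimately show "y \<in> {w. 0 < Im w \<and> Im w < 1}"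
        using \<open>0 < u\<close> by simp
    qed
    moreover have "z \<in> closure (open_segment z w)"
      using False by simp
    ultimately show ?thesis
      using zero continuous_constant_on_closure[of "open_segment z w" f c z] by blast
  qed
qed

lemma holomorphic_strip_vanishing:
  fixes f :: "complex \<Rightarrow> complex"
  assumes holo: "f holomorphic_on {z. 0 < Im z \<and> Im z < 1}"
    and cont: "continuous_on {z. 0 \<le> Im z \<and> Im z \<le> 1} f"
    and "\<alpha> < \<beta>" and zero: "\<And>t. \<alpha> < t \<Longrightarrow> t < \<beta> \<Longrightarrow> f (of_real t) = 0"
    and "0 \<le> Im z" and "Im z \<le> 1"
  shows "f z = 0"
proof -
  define R where "R = {w. \<alpha> < Re w \<and> Re w < \<beta> \<and> -1 < Im w \<and> Im w < 1}"
  define T where "T = {w. 0 < Im w \<and> Im w < 1}"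
  have "open R" "open T"
    unfolding R_def T_def by (intro open_Collect_conj open_Collect_less continuous_intros)+
  have "convex R"
    unfolding R_def Collect_conj_eq
    by (intro convex_Int convex_halfspace_Re_gt convex_halfspace_Re_lt convex_halfspace_Im_gt convex_halfspace_Im_lt)
  have "convex T"
    unfolding T_def Collect_conj_eq by (intro convex_Int convex_halfspace_Im_gt convex_halfspace_Im_lt)
  have upper_R: "f w = 0" if "w \<in> R \<inter> {w. 0 < Im w}" for w
  proof (rule holomorphic_vanishing_on_real_axis[where S = R and x = "of_real ((\<alpha> + \<beta>) / 2)" and f = f and z = w])
    show "connected R" using \<open>convex R\<close> by (rule convex_connected)
    show "f holomorphic_on R \<inter> {z. 0 < Im z}"
      by (rule holomorphic_on_subset[OF holo]) (auto simp: R_def)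
    show "continuous_on (R \<inter> {z. 0 \<le> Im z}) f"
      by (rule continuous_on_subset[OF cont]) (auto simp: R_def)
    show "f v = 0" if "v \<in> R" "v \<in> \<real>" for v
      using that zero[of "Re v"] by (auto simp: R_def complex_is_Real_iff complex_eq_iff)
  qed (use \<open>open R\<close> \<open>\<alpha> < \<beta>\<close> that in \<open>auto simp: R_def\<close>)
  have strip: "f w = 0" if "w \<in> T" for w
  proof (rule analytic_continuation_open[where f = f and g = "\<lambda>_. 0" and z = w, OF _ \<open>open T\<close>])
    show "open (R \<inter> {w. 0 < Im w})"
      using \<open>open R\<close> by (intro open_Int open_Collect_less continuous_intros)
    have "Complex ((\<alpha> + \<beta>) / 2) (1 / 2) \<in> R \<inter> {w. 0 < Im w}"
      using \<open>\<alpha> < \<beta>\<close> by (simp add: R_def)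
    then show "R \<inter> {w. 0 < Im w} \<noteq> {}" by blast
    show "connected T" using \<open>convex T\<close> by (rule convex_connected)
    show "f holomorphic_on T" using holo by (simp add: T_def)
  qed (use upper_R that in \<open>auto simp: R_def T_def\<close>)
  show ?thesis
    using constant_on_closed_strip[OF cont] strip assms(5,6) by (simp add: T_def)
qed

lemma exp_mult_le_one_add_exp:
  fixes s c :: real
  assumes "0 \<le> s" and "s \<le> 1"
  shows "exp (s * c) \<le> 1 + exp c"
proof (cases "c \<ge> 0")
  case True
  then have "s * c \<le> c" using assms by (simp add: mult_left_le_one_le)
  then show ?thesis by (smt (verit) exp_gt_zero exp_le_cancel_iff)
next
  case False
  then have "s * c \<le> 0" using assms by (simp add: mult_nonneg_nonpos)
  then show ?thesis by (smt (verit) exp_gt_zero exp_le_one_iff)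
qed

lemma abs_mult_exp_mult_le:
  fixes s c d :: real
  assumes "0 < d" and "d \<le> s" and "s \<le> 1 - d"
  shows "\<bar>c\<bar> * exp (s * c) \<le> (1 + exp c) / d"
proof -
  \<comment> \<open>\<open>d \<bar>c\<bar> \<le> exp (d \<bar>c\<bar>)\<close> absorbs the linear factor into the exponential\<close>
  have "d * (\<bar>c\<bar> * exp (s * c)) \<le> 1 + exp c"
  proof (cases "c \<ge> 0")
    case True
    have "d * c \<le> exp (d * c)" using exp_ge_add_one_self[of "d * c"] by linarith
    moreover have "exp (s * c) \<le> exp ((1 - d) * c)" using True assms by (simp add: mult_right_mono)
    ultimately have "d * c * exp (s * c) \<le> exp (d * c) * exp ((1 - d) * c)"
      using True assms by (intro mult_mono) auto
    also have "\<dots> = exp c" by (simp add: exp_add[symmetric] algebra_simps)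
    finally show ?thesis using True by (simp add: mult.assoc)
  next
    case False
    have "d * (-c) \<le> exp (d * (-c))" using exp_ge_add_one_self[of "d * (-c)"] by linarith
    moreover have "exp (s * c) \<le> exp (d * c)" using False assms by (simp add: mult_right_mono_neg)
    ultimately have "d * (-c) * exp (s * c) \<le> exp (d * (-c)) * exp (d * c)"
      using False assms by (intro mult_mono) auto
    also have "\<dots> = 1" by (simp add: exp_add[symmetric])
    finally show ?thesis using False by (smt (verit) exp_gt_zero mult.assoc)
  qed
  then show ?thesis using assms by (simp add: le_divide_eq mult.commute)
qed

lemma interval_scaled_into_interval:
  fixes a b l :: real
  assumes "a < b" and "l \<noteq> 0"
  obtains \<alpha> \<beta> where "\<alpha> < \<beta>" and "\<And>t. \<alpha> < t \<Longrightarrow> t < \<beta> \<Longrightarrow> - (t * l) \<in> {a..b}"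
proof (cases "l > 0")
  case True
  show ?thesis
  proof (rule that[of "- b / l" "- a / l"])
    show "- b / l < - a / l" using True \<open>a < b\<close> by (simp add: divide_strict_right_mono)
  qed (use True in \<open>auto simp: field_simps\<close>)
next
  case False
  then have "l < 0" using \<open>l \<noteq> 0\<close> by simp
  show ?thesis
  proof (rule that[of "- a / l" "- b / l"])
    show "- a / l < - b / l" using \<open>l < 0\<close> \<open>a < b\<close> by (simp add: divide_strict_right_mono_neg)
  qed (use \<open>l < 0\<close> in \<open>auto simp: field_simps\<close>)
qed

lemma norm_exp_minus_ii_mult: "norm (exp (- \<i> * z * complex_of_real c)) = exp (Im z * c)"
  by (simp add: norm_exp_eq_Re)

locale exponential_moment = real_distribution M for M :: "real measure" +
  fixes l :: real
  assumes integrable_exp: "integrable M (\<lambda>x. exp (l * x))"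
begin

definition strip_char :: "complex \<Rightarrow> complex" where
  "strip_char z = (LINT x|M. exp (- \<i> * z * of_real (l * x)))"

lemma strip_char_of_real: "strip_char (of_real t) = char M (- (t * l))"
  unfolding strip_char_def char_def
  by (rule Bochner_Integration.integral_cong) (auto simp: algebra_simps)

lemma integrable_strip_char_integrand:
  assumes "0 \<le> Im z" and "Im z \<le> 1"
  shows "integrable M (\<lambda>x. exp (- \<i> * z * of_real (l * x)))"
proof (rule Bochner_Integration.integrable_bound)
  show "integrable M (\<lambda>x. 1 + exp (l * x))"
    using integrable_exp by auto
  show "AE x in M. norm (exp (- \<i> * z * of_real (l * x))) \<le> norm (1 + exp (l * x))"
    using exp_mult_le_one_add_exp[OF assms] by (intro AE_I2) (simp add: norm_exp_minus_ii_mult add_pos_pos)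
qed measurable

lemma continuous_on_strip_char: "continuous_on {z. 0 \<le> Im z \<and> Im z \<le> 1} strip_char"
  unfolding strip_char_def[abs_def]
proof (rule continuous_on_integral_dominated)
  show "integrable M (\<lambda>x. 1 + exp (l * x))"
    using integrable_exp by auto
  show "norm (exp (- \<i> * z * of_real (l * x))) \<le> 1 + exp (l * x)"
    if "z \<in> {z. 0 \<le> Im z \<and> Im z \<le> 1}" for z x
    using that exp_mult_le_one_add_exp by (simp add: norm_exp_minus_ii_mult)
qed (auto intro!: continuous_intros)

lemma holomorphic_on_strip_char: "strip_char holomorphic_on {z. 0 < Im z \<and> Im z < 1}"
proof (subst holomorphic_on_open, (intro open_Collect_conj open_Collect_less continuous_intros; simp), intro ballI)
  fix z assume "z \<in> {z. 0 < Im z \<and> Im z < 1}"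
  define r where "r = min (Im z) (1 - Im z) / 2"
  have "r > 0" using \<open>z \<in> _\<close> by (auto simp: r_def)
  have Im_ball: "r \<le> Im y \<and> Im y \<le> 1 - r" if "y \<in> ball z r" for y
  proof -
    have "\<bar>Im y - Im z\<bar> < r"
      using that abs_Im_le_cmod[of "y - z"] by (simp add: dist_norm norm_minus_commute)
    then have "Im z - r < Im y \<and> Im y < Im z + r"
      by (simp add: abs_diff_less_iff)
    then show ?thesis
      unfolding r_def min_def by (cases "Im z \<le> 1 - Im z") (auto simp: field_simps)
  qed
  have "(strip_char has_field_derivative
          (LINT x|M. - \<i> * of_real (l * x) * exp (- \<i> * z * of_real (l * x)))) (at z)"
    unfolding strip_char_def[abs_def]
  proof (rule has_field_derivative_integral[where r = r and w = "\<lambda>x. (1 + exp (l * x)) / r"])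
    show "integrable M (\<lambda>x. (1 + exp (l * x)) / r)"
      using integrable_exp by auto
    show "integrable M (\<lambda>x. exp (- \<i> * y * of_real (l * x)))" if "y \<in> ball z r" for y
      using Im_ball[OF that] \<open>r > 0\<close> by (intro integrable_strip_char_integrand) auto
    show "norm (- \<i> * of_real (l * x) * exp (- \<i> * y * of_real (l * x))) \<le> (1 + exp (l * x)) / r"
      if "y \<in> ball z r" for y x
      using abs_mult_exp_mult_le[of r "Im y" "l * x"] Im_ball[OF that] \<open>r > 0\<close>
      by (simp add: norm_mult norm_exp_minus_ii_mult abs_mult)
  qed (use \<open>r > 0\<close> in \<open>auto intro!: derivative_eq_intros\<close>)
  then show "\<exists>f'. (strip_char has_field_derivative f') (at z)" by blast
qed

end

theorem lemma2p3:
  fixes M :: "real measure" and l :: real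
  assumes "real_distribution M"
    and "l \<noteq> 0"
    and "(\<integral>\<^sup>+ x. ennreal (exp (l * x)) \<partial>M) < \<infinity>"
  shows "\<forall>a b. a < b \<longrightarrow> \<not> (\<forall>t\<in>{a..b}. char M t = 0)"
proof (intro allI impI notI)
  fix a b :: real
  assume "a < b" and char_vanishes: "\<forall>t\<in>{a..b}. char M t = 0"
  interpret real_distribution M by fact
  have "integrable M (\<lambda>x. exp (l * x))"
    using assms(3) by (subst integrable_iff_bounded) auto
  then interpret exponential_moment M l
    using assms(1) by (simp add: exponential_moment_def exponential_moment_axioms_def)
  obtain \<alpha> \<beta> where "\<alpha> < \<beta>" and into: "\<And>t. \<alpha> < t \<Longrightarrow> t < \<beta> \<Longrightarrow> - (t * l) \<in> {a..b}"
    using interval_scaled_into_interval[OF \<open>a < b\<close> \<open>l \<noteq> 0\<close>] by blast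
  have "strip_char (of_real t) = 0" if "\<alpha> < t" and "t < \<beta>" for t
    using into[OF that] char_vanishes by (simp add: strip_char_of_real)
  then have "strip_char 0 = 0"
    using holomorphic_strip_vanishing[OF holomorphic_on_strip_char continuous_on_strip_char \<open>\<alpha> < \<beta>\<close>]
    by simp
  then show False
    using strip_char_of_real[of 0] char_zero by simp
qed

end
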